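(* Let $g\in\mathcal{G}_0$ and let $k>1$ be an integer. Then $$\limsup_{x\to0^+}\frac{g(x)}{\eta(x)}=\limsup_{n\to\infty}\frac{g(k^{-n})}{\eta(k^{-n})}\quad\text{and}\quad\liminf_{x\to0^+}\frac{g(x)}{\eta(x)}=\liminf_{n\to\infty}\frac{g(k^{-n})}{\eta(k^{-n})}.$$
   Context: $\mathcal{G}_0$ is the set of concave functions $g:[0,1]\to\mathbb{R}$ with $g(0)=\lim_{x\to0^+}g(x)=0$. Let $\eta(x)=-x\log x$ for $x>0$ and $\eta(0)=0$. *)

theory Defs
  imports "HOL-Analysis.Analysis"
begin

definition G0 :: "(real \<Rightarrow> real) set" where
  "G0 = {g. concave_on {0..1} g \<and> g 0 = 0 \<and> (g \<longlongrightarrow> 0) (at_right 0)}"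

definition eta :: "real \<Rightarrow> real" where
  "eta x = (if x > 0 then - x * ln x else 0)"

end

theory Submission
  imports Defs
begin

text \<open>For concave g with g(0) = 0 the slope g(x)/x is nonincreasing, and
  g(x)/eta(x) = (g(x)/x)/(-ln x). On a block k^-(m+1) < x \<le> k^-m the slope lies between its
  values at the endpoints and -ln x lies between m ln k and (m+1) ln k, so g/eta is squeezed
  between the sampled ratios at the endpoints, rescaled by factors (m+1)/m or m/(m+1) tending to 1
  (a max or min of the two scalings, as the slope may have either sign).
  Hence the lim sup and lim inf as x \<rightarrow> 0+ are no larger (smaller) than along k^-n;
  the converse inequalities hold because k^-n \<rightarrow> 0+.\<close>

lemma Limsup_compose_le:
  fixes f :: "'a \<Rightarrow> 'b::complete_linorder"
  assumes "filterlim m G F"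
  shows "Limsup F (\<lambda>x. f (m x)) \<le> Limsup G f"
  unfolding Limsup_le_iff
proof (intro allI impI)
  fix y assume "Limsup G f < y"
  then have "eventually (\<lambda>x. f x < y) G" by (rule Limsup_lessD)
  then show "eventually (\<lambda>x. f (m x) < y) F"
    using assms unfolding filterlim_iff by blast
qed

lemma Liminf_compose_ge:
  fixes f :: "'a \<Rightarrow> 'b::complete_linorder"
  assumes "filterlim m G F"
  shows "Liminf G f \<le> Liminf F (\<lambda>x. f (m x))"
  unfolding le_Liminf_iff
proof (intro allI impI)
  fix y assume "y < Liminf G f"
  then have "eventually (\<lambda>x. y < f x) G" by (rule less_LiminfD)
  then show "eventually (\<lambda>x. y < f (m x)) F"
    using assms unfolding filterlim_iff by blast
qed

lemma Limsup_max_le: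
  fixes f g :: "'a \<Rightarrow> 'b::complete_linorder"
  shows "Limsup F (\<lambda>x. max (f x) (g x)) \<le> max (Limsup F f) (Limsup F g)"
  unfolding Limsup_le_iff
proof (intro allI impI)
  fix y assume y: "max (Limsup F f) (Limsup F g) < y"
  have "eventually (\<lambda>x. f x < y) F" "eventually (\<lambda>x. g x < y) F"
    using y by (auto intro: Limsup_lessD)
  then show "eventually (\<lambda>x. max (f x) (g x) < y) F"
    by eventually_elim simp
qed

lemma Liminf_min_ge:
  fixes f g :: "'a \<Rightarrow> 'b::complete_linorder"
  shows "min (Liminf F f) (Liminf F g) \<le> Liminf F (\<lambda>x. min (f x) (g x))"
  unfolding le_Liminf_iff
proof (intro allI impI)
  fix y assume y: "y < min (Liminf F f) (Liminf F g)"
  have "eventually (\<lambda>x. y < f x) F" "eventually (\<lambda>x. y < g x) F"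
    using y by (auto intro: less_LiminfD)
  then show "eventually (\<lambda>x. y < min (f x) (g x)) F"
    by eventually_elim simp
qed

lemma eventually_at_right_0_by_blocks:
  fixes a :: "nat \<Rightarrow> real"
  assumes "decseq a" "a \<longlonglongrightarrow> 0" "\<And>n. 0 < a n"
    and "eventually (\<lambda>m. \<forall>x. a (Suc m) < x \<and> x \<le> a m \<longrightarrow> P x) sequentially"
  shows "eventually P (at_right 0)"
proof -
  obtain N where N: "\<And>m x. N \<le> m \<Longrightarrow> a (Suc m) < x \<Longrightarrow> x \<le> a m \<Longrightarrow> P x"
    using assms(4) unfolding eventually_sequentially by blast
  have "P x" if x: "0 < x" "x < a N" for x
  proof -
    obtain M where "\<And>n. M \<le> n \<Longrightarrow> a n < x"
      using order_tendstoD(2)[OF assms(2) x(1)] unfolding eventually_sequentially by blast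
    then have "\<exists>n. a (N + n) < x"
      using le_add2 by blast
    then obtain n where "\<not> a (N + n) < x" "a (N + Suc n) < x"
      using exists_least_lemma[where P = "\<lambda>n. a (N + n) < x"] x(2) by auto
    then show "P x"
      using N[of "N + n" x] by simp
  qed
  then show ?thesis
    unfolding eventually_at_right_field using assms(3) by blast
qed

lemma Limsup_at_right_0_le_by_blocks:
  fixes a :: "nat \<Rightarrow> real" and f :: "real \<Rightarrow> 'b::complete_linorder"
  assumes "decseq a" "a \<longlonglongrightarrow> 0" "\<And>n. 0 < a n"
    and "eventually (\<lambda>m. \<forall>x. a (Suc m) < x \<and> x \<le> a m \<longrightarrow> f x \<le> u m) sequentially"
  shows "Limsup (at_right 0) f \<le> limsup u"
  unfolding Limsup_le_iff
proof (intro allI impI)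
  fix y assume "limsup u < y"
  then have "eventually (\<lambda>m. u m < y) sequentially" by (rule Limsup_lessD)
  with assms(4) have "eventually (\<lambda>m. \<forall>x. a (Suc m) < x \<and> x \<le> a m \<longrightarrow> f x < y) sequentially"
    by eventually_elim (auto intro: le_less_trans)
  then show "eventually (\<lambda>x. f x < y) (at_right 0)"
    by (rule eventually_at_right_0_by_blocks[OF assms(1-3)])
qed

lemma liminf_le_Liminf_at_right_0_by_blocks:
  fixes a :: "nat \<Rightarrow> real" and f :: "real \<Rightarrow> 'b::complete_linorder"
  assumes "decseq a" "a \<longlonglongrightarrow> 0" "\<And>n. 0 < a n"
    and "eventually (\<lambda>m. \<forall>x. a (Suc m) < x \<and> x \<le> a m \<longrightarrow> v m \<le> f x) sequentially"
  shows "liminf v \<le> Liminf (at_right 0) f"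
  unfolding le_Liminf_iff
proof (intro allI impI)
  fix y assume "y < liminf v"
  then have "eventually (\<lambda>m. y < v m) sequentially" by (rule less_LiminfD)
  with assms(4) have "eventually (\<lambda>m. \<forall>x. a (Suc m) < x \<and> x \<le> a m \<longrightarrow> y < f x) sequentially"
    by eventually_elim (auto intro: less_le_trans)
  then show "eventually (\<lambda>x. y < f x) (at_right 0)"
    by (rule eventually_at_right_0_by_blocks[OF assms(1-3)])
qed

lemma divide_le_max_divide:
  fixes p :: real
  assumes "0 < A" "A \<le> L" "L \<le> B"
  shows "p / L \<le> max (p / A) (p / B)"
proof (cases "p \<ge> 0")
  case True
  then show ?thesis using assms by (simp add: divide_left_mono)
next
  case False
  then show ?thesis using assms by (simp add: divide_left_mono_neg)
qed

lemma min_divide_le_divide: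
  fixes p :: real
  assumes "0 < A" "A \<le> L" "L \<le> B"
  shows "min (p / A) (p / B) \<le> p / L"
proof (cases "p \<ge> 0")
  case True
  then show ?thesis using assms by (simp add: divide_left_mono)
next
  case False
  then show ?thesis using assms by (simp add: divide_left_mono_neg)
qed

lemma G0_slope_antimono:
  assumes "g \<in> G0" "0 < x" "x \<le> y" "y \<le> 1"
  shows "g y / y \<le> g x / x"
proof -
  have c: "concave_on {0..1} g" and g0: "g 0 = 0" using assms(1) by (auto simp: G0_def)
  have "(1 - x/y) * g 0 + (x/y) * g y \<le> g ((1 - x/y) *\<^sub>R 0 + (x/y) *\<^sub>R y)"
    by (rule concave_onD[OF c]) (use assms in auto)
  then have "(x/y) * g y \<le> g x" using assms g0 by simp
  then show ?thesis using assms by (simp add: field_simps)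
qed

lemma eta_inverse_power:
  fixes k :: real
  assumes "0 < k"
  shows "eta (1 / k ^ n) = real n * ln k / k ^ n"
  using assms by (simp add: eta_def ln_div ln_realpow)

lemma ratio_eta_eq:
  assumes "0 < x"
  shows "g x / eta x = (g x / x) / (- ln x)"
  using assms by (simp add: eta_def)

lemma minus_ln_between_inverse_powers:
  fixes k x :: real
  assumes "1 < k" "1 / k ^ Suc m < x" "x \<le> 1 / k ^ m"
  shows "real m * ln k \<le> - ln x" "- ln x \<le> real (Suc m) * ln k"
proof -
  have "0 < 1 / k ^ Suc m" using assms(1) by simp
  then have "ln (1 / k ^ Suc m) \<le> ln x" "ln x \<le> ln (1 / k ^ m)"
    using assms(2,3) by (simp_all only: ln_le_cancel_iff less_imp_le less_trans)
  then show "real m * ln k \<le> - ln x" "- ln x \<le> real (Suc m) * ln k"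
    using assms(1) by (simp_all add: ln_div ln_realpow ln_mult algebra_simps)
qed

lemma ratio_eta_inverse_power:
  fixes k :: real
  assumes "0 < k"
  shows "g (1 / k ^ n) / eta (1 / k ^ n) = (g (1 / k ^ n) / (1 / k ^ n)) / (real n * ln k)"
  using assms by (simp add: eta_inverse_power)

lemma G0_ratio_le_block:
  fixes k :: real
  assumes "g \<in> G0" "1 < k" "1 \<le> m" "1 / k ^ Suc m < x" "x \<le> 1 / k ^ m"
  defines "r \<equiv> g (1 / k ^ Suc m) / eta (1 / k ^ Suc m)"
  shows "g x / eta x \<le> max r (real (Suc m) / real m * r)"
proof -
  define p where "p = g (1 / k ^ Suc m) / (1 / k ^ Suc m)"
  have L: "real m * ln k \<le> - ln x" "- ln x \<le> real (Suc m) * ln k"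
    using minus_ln_between_inverse_powers[OF assms(2,4,5)] by auto
  have mk: "0 < real m * ln k" using assms(2,3) by simp
  have "0 < 1 / k ^ Suc m" "1 / k ^ m \<le> 1" using assms(2) by simp_all
  then have x: "0 < x" "x \<le> 1" using assms(4,5) by linarith+
  have "g x / eta x = (g x / x) / (- ln x)" by (rule ratio_eta_eq[OF x(1)])
  also have "\<dots> \<le> p / (- ln x)"
    unfolding p_def using L mk x assms
    by (intro divide_right_mono G0_slope_antimono) (auto simp: order.strict_implies_order)
  also have "\<dots> \<le> max (p / (real m * ln k)) (p / (real (Suc m) * ln k))"
    by (rule divide_le_max_divide[OF mk L])
  also have "\<dots> = max r (real (Suc m) / real m * r)"
    using assms(2) mk ratio_eta_inverse_power[where k = k and n = "Suc m" and g = g]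
    unfolding r_def p_def by (simp add: max.commute)
  finally show ?thesis .
qed

lemma G0_ratio_ge_block:
  fixes k :: real
  assumes "g \<in> G0" "1 < k" "1 \<le> m" "1 / k ^ Suc m < x" "x \<le> 1 / k ^ m"
  defines "r \<equiv> g (1 / k ^ m) / eta (1 / k ^ m)"
  shows "min r (real m / real (Suc m) * r) \<le> g x / eta x"
proof -
  define p where "p = g (1 / k ^ m) / (1 / k ^ m)"
  have L: "real m * ln k \<le> - ln x" "- ln x \<le> real (Suc m) * ln k"
    using minus_ln_between_inverse_powers[OF assms(2,4,5)] by auto
  have mk: "0 < real m * ln k" using assms(2,3) by simp
  have "0 < 1 / k ^ Suc m" "1 / k ^ m \<le> 1" using assms(2) by simp_all
  then have x: "0 < x" "x \<le> 1" using assms(4,5) by linarith+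
  have "min r (real m / real (Suc m) * r) = min (p / (real m * ln k)) (p / (real (Suc m) * ln k))"
    using assms(2,3) mk ratio_eta_inverse_power[where k = k and n = m and g = g]
    unfolding r_def p_def by simp
  also have "\<dots> \<le> p / (- ln x)"
    by (rule min_divide_le_divide[OF mk L])
  also have "\<dots> \<le> (g x / x) / (- ln x)"
    unfolding p_def using L mk x assms
    by (intro divide_right_mono G0_slope_antimono) auto
  also have "\<dots> = g x / eta x" by (rule ratio_eta_eq[OF x(1), symmetric])
  finally show ?thesis .
qed

lemma decseq_inverse_power:
  fixes k :: real
  assumes "1 \<le> k"
  shows "decseq (\<lambda>n. 1 / k ^ n)"
  using assms by (intro decseq_SucI) (simp add: field_simps)

lemma LIMSEQ_inverse_power_zero:
  fixes k :: real
  assumes "1 < k"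
  shows "(\<lambda>n. 1 / k ^ n) \<longlonglongrightarrow> 0"
  using LIMSEQ_inverse_realpow_zero[OF assms] by (simp add: inverse_eq_divide)

lemma Limsup_G0_ratio_le:
  fixes k :: real
  assumes "g \<in> G0" "1 < k"
  shows "Limsup (at_right 0) (\<lambda>x. ereal (g x / eta x))
           \<le> limsup (\<lambda>n. ereal (g (1 / k ^ n) / eta (1 / k ^ n)))"
proof -
  define S where "S n = ereal (g (1 / k ^ n) / eta (1 / k ^ n))" for n
  define c where "c n = ereal (real (Suc n) / real n)" for n
  have c: "c \<longlonglongrightarrow> 1"
    unfolding c_def one_ereal_def lim_ereal by (rule LIMSEQ_Suc_n_over_n)
  have blocks: "eventually (\<lambda>m. \<forall>x. 1 / k ^ Suc m < x \<and> x \<le> 1 / k ^ m \<longrightarrow>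
          ereal (g x / eta x) \<le> max (S (Suc m)) (c m * S (Suc m))) sequentially"
    using eventually_ge_at_top[of 1]
  proof eventually_elim
    case (elim m)
    then show ?case
      using G0_ratio_le_block[OF assms, of m] by (auto simp: S_def c_def simp flip: ereal_max)
  qed
  have "Limsup (at_right 0) (\<lambda>x. ereal (g x / eta x))
          \<le> limsup (\<lambda>m. max (S (Suc m)) (c m * S (Suc m)))"
    using assms(2) by (intro Limsup_at_right_0_le_by_blocks[OF _ _ _ blocks]
        decseq_inverse_power LIMSEQ_inverse_power_zero) auto
  also have "\<dots> \<le> max (limsup (\<lambda>m. S (Suc m))) (limsup (\<lambda>m. c m * S (Suc m)))"
    by (rule Limsup_max_le)
  also have "\<dots> = limsup S"
    using limsup_shift[of S] ereal_limsup_lim_mult[OF c, of "\<lambda>m. S (Suc m)"] by simp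
  finally show ?thesis unfolding S_def .
qed

lemma liminf_le_Liminf_G0_ratio:
  fixes k :: real
  assumes "g \<in> G0" "1 < k"
  shows "liminf (\<lambda>n. ereal (g (1 / k ^ n) / eta (1 / k ^ n)))
           \<le> Liminf (at_right 0) (\<lambda>x. ereal (g x / eta x))"
proof -
  define S where "S n = ereal (g (1 / k ^ n) / eta (1 / k ^ n))" for n
  define c where "c n = ereal (real n / real (Suc n))" for n
  have c: "c \<longlonglongrightarrow> 1"
    unfolding c_def one_ereal_def lim_ereal by (rule LIMSEQ_n_over_Suc_n)
  have "liminf S = min (liminf S) (liminf (\<lambda>m. c m * S m))"
    using ereal_liminf_lim_mult[OF c, of S] by simp
  also have "\<dots> \<le> liminf (\<lambda>m. min (S m) (c m * S m))"
    by (rule Liminf_min_ge)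
  also have "\<dots> \<le> Liminf (at_right 0) (\<lambda>x. ereal (g x / eta x))"
  proof (rule liminf_le_Liminf_at_right_0_by_blocks)
    show "eventually (\<lambda>m. \<forall>x. 1 / k ^ Suc m < x \<and> x \<le> 1 / k ^ m \<longrightarrow>
            min (S m) (c m * S m) \<le> ereal (g x / eta x)) sequentially"
      using eventually_ge_at_top[of 1]
    proof eventually_elim
      case (elim m)
      then show ?case
        using G0_ratio_ge_block[OF assms, of m] by (auto simp: S_def c_def simp flip: ereal_min)
    qed
  qed (use assms(2) decseq_inverse_power LIMSEQ_inverse_power_zero in auto)
  finally show ?thesis unfolding S_def .
qed

theorem mainTheorem9:
  fixes g :: "real \<Rightarrow> real" and k :: nat
  assumes "g \<in> G0" and "k > 1"
  shows "Limsup (at_right 0) (\<lambda>x. ereal (g x / eta x)) =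
           limsup (\<lambda>n. ereal (g (1 / real k ^ n) / eta (1 / real k ^ n)))
       \<and> Liminf (at_right 0) (\<lambda>x. ereal (g x / eta x)) =
           liminf (\<lambda>n. ereal (g (1 / real k ^ n) / eta (1 / real k ^ n)))"
proof -
  have k: "1 < real k" using assms(2) by simp
  have "filterlim (\<lambda>n. 1 / real k ^ n) (at_right 0) sequentially"
    using k by (intro tendsto_imp_filterlim_at_right LIMSEQ_inverse_power_zero) auto
  then have "limsup (\<lambda>n. ereal (g (1 / real k ^ n) / eta (1 / real k ^ n)))
               \<le> Limsup (at_right 0) (\<lambda>x. ereal (g x / eta x))"
        and "Liminf (at_right 0) (\<lambda>x. ereal (g x / eta x))
               \<le> liminf (\<lambda>n. ereal (g (1 / real k ^ n) / eta (1 / real k ^ n)))"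
    by (rule Limsup_compose_le, rule Liminf_compose_ge)
  with Limsup_G0_ratio_le[OF assms(1) k] liminf_le_Liminf_G0_ratio[OF assms(1) k]
  show ?thesis by (intro conjI antisym)
qed

end
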